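(* For each integer $r\ge3$, with $n=2^r+3$, the codewords $|\bar0\rangle=\tfrac{1}{\sqrt{2^{r+1}}}\big(\sqrt{2^r-3}\,|D^{n}_0\rangle+\sqrt{2^r+3}\,|D^{n}_{2^r}\rangle\big)$, $|\bar1\rangle=\tfrac{1}{\sqrt{2^{r+1}}}\big(\sqrt{2^r+3}\,|D^{n}_3\rangle+\sqrt{2^r-3}\,|D^{n}_{n}\rangle\big)$ span a non-additive permutationally invariant $((2^r+3,2,3))$ $n$-qubit code with transversal group $\mathsf{Q}^{(r)}$, i.e. a $((2^r+3,2,3,\mathsf{Q}^{(r)}))$ code.
   Context: $|D^n_w\rangle$ is the normalized uniform superposition of all $n$-qubit computational basis states of Hamming weight $w$. An $((n,K,d))$ code is a $K$-dimensional subspace of $n$ qubits with $\langle\phi|E|\psi\rangle=c_E\langle\phi|\psi\rangle$ for all codewords and all Pauli $E$ of weight $<d$ ($c_E$ independent of codewords). Non-additive = not a stabilizer code. Permutationally invariant: codewords invariant under all qubit permutations. With $\mathsf{X}=\begin{pmatrix}0&-i\\-i&0\end{pmatrix}$, $\mathsf{Z}=\mathrm{diag}(-i,i)$, $\mathsf{Ph}(\alpha)=\mathrm{diag}(e^{-i\alpha/2},e^{i\alpha/2})$, the generalized quaternion group is $\mathsf{Q}^{(r)}=\mathsf{BD}_{2^r}=\langle\mathsf{X},\mathsf{Z},\mathsf{Ph}(2\pi/2^r)\rangle$ (order $2^{r+2}$); e.g. $\mathsf{Q}^{(3)}$ contains $\mathsf{T}=\mathsf{Ph}(\pi/4)$.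 A code with encoding isometry $V$ has transversal group $\mathsf{G}\subset\mathrm{SU}(2)$ ($\mathsf{G}$-transversal) if $g^{\otimes n}V=V\lambda(g)$ for all $g\in\mathsf{G}$, for a faithful two-dimensional irreducible representation $\lambda$ of $\mathsf{G}$. *)

theory Defs
  imports Complex_Main
begin

text \<open>An n-qubit state is a function nat => complex supported on
  the computational basis indices x < 2^n; qubit i of basis state x is bit i of x.
  A single-qubit operator is a 2x2 complex matrix indexed by bool
  (False = |0>, True = |1>), entry A a b = <a|A|b>.\<close>

type_synonym qstate = "nat \<Rightarrow> complex"
type_synonym mat2 = "bool \<Rightarrow> bool \<Rightarrow> complex"

definition supported :: "nat \<Rightarrow> qstate \<Rightarrow> bool" where
  "supported n \<psi> \<longleftrightarrow> (\<forall>x\<ge>2^n. \<psi> x = 0)"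

definition qinner :: "nat \<Rightarrow> qstate \<Rightarrow> qstate \<Rightarrow> complex" where
  "qinner n \<phi> \<psi> = (\<Sum>x<2^n. cnj (\<phi> x) * \<psi> x)"

definition tensor_apply :: "nat \<Rightarrow> (nat \<Rightarrow> mat2) \<Rightarrow> qstate \<Rightarrow> qstate" where
  "tensor_apply n A \<psi> = (\<lambda>x. if x < 2^n then
      (\<Sum>y<2^n. (\<Prod>i<n. A i (bit x i) (bit y i)) * \<psi> y) else 0)"

definition hweight :: "nat \<Rightarrow> nat \<Rightarrow> nat" where
  "hweight n x = card {i. i < n \<and> bit x i}"

definition dicke :: "nat \<Rightarrow> nat \<Rightarrow> qstate" where
  "dicke n w = (\<lambda>x. if x < 2^n \<and> hweight n x = w
                     then complex_of_real (1 / sqrt (real (n choose w))) else 0)"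

text \<open>Single-qubit Pauli matrices: 0 = I, 1 = X, 2 = Y, 3 = Z (standard Hermitian ones).\<close>
definition pauli1 :: "nat \<Rightarrow> mat2" where
  "pauli1 k = (\<lambda>a b.
     if k = 1 then (if a \<noteq> b then 1 else 0)
     else if k = 2 then (if a = b then 0 else if a then \<i> else - \<i>)
     else if k = 3 then (if a = b then (if a then -1 else 1) else 0)
     else (if a = b then 1 else 0))"

definition pauli_string :: "nat \<Rightarrow> (nat \<Rightarrow> nat) \<Rightarrow> bool" where
  "pauli_string n p \<longleftrightarrow> (\<forall>i<n. p i < 4)"

definition pauli_weight :: "nat \<Rightarrow> (nat \<Rightarrow> nat) \<Rightarrow> nat" where
  "pauli_weight n p = card {i. i < n \<and> p i \<noteq> 0}"

definition pauli_op :: "nat \<Rightarrow> (nat \<Rightarrow> nat) \<Rightarrow> qstate \<Rightarrow> qstate" where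
  "pauli_op n p = tensor_apply n (\<lambda>i. pauli1 (p i))"

definition cspan_list :: "qstate list \<Rightarrow> qstate set" where
  "cspan_list B = {(\<lambda>x. \<Sum>j<length B. a j * (B ! j) x) | a. True}"

definition orthonormal_list :: "nat \<Rightarrow> qstate list \<Rightarrow> bool" where
  "orthonormal_list n B \<longleftrightarrow> (\<forall>j<length B. supported n (B ! j)) \<and>
     (\<forall>j<length B. \<forall>k<length B. qinner n (B ! j) (B ! k) = (if j = k then 1 else 0))"

definition qcode :: "nat \<Rightarrow> nat \<Rightarrow> nat \<Rightarrow> qstate set \<Rightarrow> bool" where
  "qcode n K d C \<longleftrightarrow>
     (\<exists>B. length B = K \<and> orthonormal_list n B \<and> C = cspan_list B) \<and>
     (\<forall>p. pauli_string n p \<and> pauli_weight n p < d \<longrightarrow>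
        (\<exists>c. \<forall>\<phi>\<in>C. \<forall>\<psi>\<in>C. qinner n \<phi> (pauli_op n p \<psi>) = c * qinner n \<phi> \<psi>))"

definition pauli_group :: "nat \<Rightarrow> (qstate \<Rightarrow> qstate) set" where
  "pauli_group n = {(\<lambda>\<psi> x. \<i> ^ k * pauli_op n p \<psi> x) | k p. pauli_string n p}"

definition minus_id :: "nat \<Rightarrow> qstate \<Rightarrow> qstate" where
  "minus_id n = (\<lambda>\<psi> x. if x < 2^n then - \<psi> x else 0)"

definition stabilizer_group :: "nat \<Rightarrow> (qstate \<Rightarrow> qstate) set \<Rightarrow> bool" where
  "stabilizer_group n S \<longleftrightarrow> S \<subseteq> pauli_group n \<and>
     (\<forall>g\<in>S. \<forall>h\<in>S. g \<circ> h \<in> S) \<and>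
     (\<forall>g\<in>S. \<forall>h\<in>S. g \<circ> h = h \<circ> g) \<and>
     minus_id n \<notin> S"

definition stabilizer_code :: "nat \<Rightarrow> qstate set \<Rightarrow> bool" where
  "stabilizer_code n C \<longleftrightarrow> (\<exists>S. stabilizer_group n S \<and>
     C = {\<psi>. supported n \<psi> \<and> (\<forall>g\<in>S. g \<psi> = \<psi>)})"

definition perm_state :: "nat \<Rightarrow> (nat \<Rightarrow> nat) \<Rightarrow> qstate \<Rightarrow> qstate" where
  "perm_state n \<pi> \<psi> = (\<lambda>x. if x < 2^n then
      \<psi> (\<Sum>i<n. if bit x (\<pi> i) then 2^i else 0) else 0)"

definition perm_invariant :: "nat \<Rightarrow> qstate set \<Rightarrow> bool" where
  "perm_invariant n C \<longleftrightarrow> (\<forall>\<psi>\<in>C. \<forall>\<pi>. bij_betw \<pi> {..<n} {..<n} \<longrightarrow>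
      perm_state n \<pi> \<psi> = \<psi>)"

definition mmul :: "mat2 \<Rightarrow> mat2 \<Rightarrow> mat2" where
  "mmul A B = (\<lambda>a b. A a False * B False b + A a True * B True b)"

definition mdet :: "mat2 \<Rightarrow> complex" where
  "mdet A = A False False * A True True - A False True * A True False"

definition mvec :: "mat2 \<Rightarrow> (bool \<Rightarrow> complex) \<Rightarrow> (bool \<Rightarrow> complex)" where
  "mvec A v = (\<lambda>a. A a False * v False + A a True * v True)"

inductive_set mgen :: "mat2 set \<Rightarrow> mat2 set" for S where
  base: "g \<in> S \<Longrightarrow> g \<in> mgen S"
| mult: "g \<in> mgen S \<Longrightarrow> h \<in> mgen S \<Longrightarrow> mmul g h \<in> mgen S"

definition sfX :: mat2 where
  "sfX = (\<lambda>a b. if a = b then 0 else - \<i>)"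

definition sfZ :: mat2 where
  "sfZ = (\<lambda>a b. if a = b then (if a then \<i> else - \<i>) else 0)"

definition sfPh :: "real \<Rightarrow> mat2" where
  "sfPh \<alpha> = (\<lambda>a b. if a = b then (if a then cis (\<alpha>/2) else cis (- \<alpha>/2)) else 0)"

text \<open>Q^(r) = BD_{2^r} = <X, Z, Ph(2 pi / 2^r)> (finite, so closure under products is the group).\<close>
definition quatgroup :: "nat \<Rightarrow> mat2 set" where
  "quatgroup r = mgen {sfX, sfZ, sfPh (2 * pi / 2^r)}"

definition faithful_irrep2 :: "mat2 set \<Rightarrow> (mat2 \<Rightarrow> mat2) \<Rightarrow> bool" where
  "faithful_irrep2 G rho \<longleftrightarrow>
     (\<forall>g\<in>G. \<forall>h\<in>G. rho (mmul g h) = mmul (rho g) (rho h)) \<and>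
     (\<forall>g\<in>G. mdet (rho g) \<noteq> 0) \<and>
     inj_on rho G \<and>
     \<not> (\<exists>v. v \<noteq> (\<lambda>_. 0) \<and> (\<forall>g\<in>G. \<exists>\<mu>. mvec (rho g) v = (\<lambda>a. \<mu> * v a)))"

text \<open>G-transversality of the code with encoding isometry V|j> = c j:
  g^{(x)n} V = V lambda(g).\<close>
definition transversal :: "nat \<Rightarrow> (bool \<Rightarrow> qstate) \<Rightarrow> mat2 set \<Rightarrow> bool" where
  "transversal n c G \<longleftrightarrow> orthonormal_list n [c False, c True] \<and>
     (\<exists>rho. faithful_irrep2 G rho \<and>
        (\<forall>g\<in>G. \<forall>j. tensor_apply n (\<lambda>_. g) (c j) =
            (\<lambda>x. rho g False j * c False x + rho g True j * c True x)))"

definition cw0 :: "nat \<Rightarrow> qstate" where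
  "cw0 r = (let n = 2^r + 3 in (\<lambda>x.
     complex_of_real (sqrt ((2::real)^r - 3) / sqrt (2^(r+1))) * dicke n 0 x +
     complex_of_real (sqrt ((2::real)^r + 3) / sqrt (2^(r+1))) * dicke n (2^r) x))"

definition cw1 :: "nat \<Rightarrow> qstate" where
  "cw1 r = (let n = 2^r + 3 in (\<lambda>x.
     complex_of_real (sqrt ((2::real)^r + 3) / sqrt (2^(r+1))) * dicke n 3 x +
     complex_of_real (sqrt ((2::real)^r - 3) / sqrt (2^(r+1))) * dicke n n x))"

end

(*
  Both codewords are symmetric states, so everything reduces to sums over Hamming weights.
  For a Pauli error supported on a set Q of at most two qubits, a matrix element between
  symmetric states splits into a local part on Q and a binomially weighted sum over the weights
  of the remaining qubits.  The Knill-Laflamme conditions then say that these weighted sums vanish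
  between the two codewords (their weights 0, 2^r and 3, 2^r + 3 are too far apart) and agree on
  the diagonal, which are binomial identities forced by the chosen amplitudes.

  The generalised quaternion group consists of monomial matrices with 2^(r+1)-th roots of unity
  as entries; such a g acts on the codewords by its entrywise (2^r + 3)-th power, a faithful
  irreducible representation because 2^r + 3 is odd.

  A stabilizer fixing |0> can flip no qubit, since |0> lives on the weights 0 and 2^r only, and
  a stabilizer fixing |1> cannot contain Z on any qubit, since all weight-3 basis states enter
  |1> with the same amplitude.  So every stabilizer would fix the weight-one basis state |10...0>,
  which is orthogonal to the code.
*)
theory Submission
  imports Defs "HOL-Library.Nat_Bijection" "HOL-Number_Theory.Cong"
begin

section \<open>Basis states as sets of qubits\<close>

lemma bit_iff_mem_set_decode: "bit x i \<longleftrightarrow> i \<in> set_decode x"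
  by (simp add: set_decode_def bit_iff_odd)

lemma bit_set_encode: "finite A \<Longrightarrow> bit (set_encode A) i \<longleftrightarrow> i \<in> A"
  by (simp add: bit_iff_mem_set_decode)

lemma set_decode_subset_lessThan:
  assumes "x < 2 ^ n"
  shows "set_decode x \<subseteq> {..<n}"
proof
  fix i assume "i \<in> set_decode x"
  moreover have "take_bit n x = x"
    using assms by (simp add: take_bit_nat_eq_self_iff)
  ultimately have "bit (take_bit n x) i"
    by (metis bit_iff_mem_set_decode)
  then show "i \<in> {..<n}" by (simp add: bit_take_bit_iff)
qed

lemma set_encode_less_power2:
  assumes "A \<subseteq> {..<n}"
  shows "set_encode A < 2 ^ n"
proof -
  have "set_encode A \<le> (\<Sum>i<n. 2 ^ i)"
    unfolding set_encode_def using assms by (intro sum_mono2) auto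
  also have "\<dots> = 2 ^ n - 1"
    using sum_power2[of n] by (simp add: atLeast0LessThan)
  also have "\<dots> < 2 ^ n"
    by simp
  finally show ?thesis .
qed

lemma bij_betw_set_encode_Pow: "bij_betw set_encode (Pow {..<n}) {..<2 ^ n}"
proof (rule bij_betw_byWitness[where f' = set_decode])
  show "\<forall>A\<in>Pow {..<n}. set_decode (set_encode A) = A"
    by (metis PowD finite_lessThan finite_subset set_encode_inverse)
qed (auto simp: set_encode_less_power2 dest: set_decode_subset_lessThan)

lemma sum_lessThan_power2_eq_sum_Pow:
  "(\<Sum>x<2 ^ n. h x) = (\<Sum>X\<in>Pow {..<n}. h (set_encode X))"
  using sum.reindex_bij_betw[OF bij_betw_set_encode_Pow, of h] by simp

lemma hweight_eq_card_set_decode: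
  assumes "x < 2 ^ n"
  shows "hweight n x = card (set_decode x)"
proof -
  have "{i. i < n \<and> bit x i} = set_decode x"
    using set_decode_subset_lessThan[OF assms] by (auto simp: bit_iff_mem_set_decode)
  then show ?thesis by (simp add: hweight_def)
qed

lemma hweight_set_encode: "A \<subseteq> {..<n} \<Longrightarrow> hweight n (set_encode A) = card A"
  by (simp add: hweight_eq_card_set_decode set_encode_less_power2 finite_subset)

lemma hweight_le: "hweight n x \<le> n"
  unfolding hweight_def by (metis (no_types, lifting) card_lessThan card_mono finite_lessThan
      lessThan_iff mem_Collect_eq subsetI)

lemma supported_eqI:
  assumes "supported n \<phi>" "supported n \<psi>"
    and "\<And>X. X \<subseteq> {..<n} \<Longrightarrow> \<phi> (set_encode X) = \<psi> (set_encode X)"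
  shows "\<phi> = \<psi>"
proof
  fix x
  show "\<phi> x = \<psi> x"
  proof (cases "x < 2 ^ n")
    case True
    then show ?thesis
      using assms(3)[OF set_decode_subset_lessThan[OF True]] by simp
  qed (use assms(1,2) in \<open>simp add: supported_def\<close>)
qed

lemma supported_tensor_apply: "supported n (tensor_apply n A \<psi>)"
  by (simp add: supported_def tensor_apply_def)

lemma tensor_apply_set_encode:
  assumes "X \<subseteq> {..<n}"
  shows "tensor_apply n A \<psi> (set_encode X) =
    (\<Sum>Y\<in>Pow {..<n}. (\<Prod>i<n. A i (i \<in> X) (i \<in> Y)) * \<psi> (set_encode Y))"
  unfolding tensor_apply_def sum_lessThan_power2_eq_sum_Pow
  using set_encode_less_power2[OF assms] finite_subset[OF assms]
  by (auto intro!: sum.cong prod.cong simp: bit_set_encode dest: finite_subset[OF _ finite_lessThan])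

text \<open>The hypothesis says that factor \<open>i\<close> maps each basis state of qubit \<open>i\<close> to a multiple of
  the basis state flipped iff \<open>flip i\<close>.\<close>
lemma tensor_apply_monomial:
  assumes X: "X \<subseteq> {..<n}"
    and monomial: "\<And>i a b. i < n \<Longrightarrow> b \<noteq> (a \<noteq> flip i) \<Longrightarrow> A i a b = 0"
  shows "tensor_apply n A \<psi> (set_encode X) =
    (\<Prod>i<n. A i (i \<in> X) ((i \<in> X) \<noteq> flip i)) * \<psi> (set_encode {i. i < n \<and> (i \<in> X) \<noteq> flip i})"
proof -
  let ?Y = "{i. i < n \<and> (i \<in> X) \<noteq> flip i}"
  let ?term = "\<lambda>Y. (\<Prod>i<n. A i (i \<in> X) (i \<in> Y)) * \<psi> (set_encode Y)"
  have zero: "?term Y = 0" if "Y \<in> Pow {..<n} - {?Y}" for Y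
  proof -
    from that obtain i where "i < n" "(i \<in> Y) \<noteq> (i \<in> ?Y)" by auto
    then have "A i (i \<in> X) (i \<in> Y) = 0" by (intro monomial) auto
    with \<open>i < n\<close> have "(\<Prod>i<n. A i (i \<in> X) (i \<in> Y)) = 0"
      by (meson finite_lessThan lessThan_iff prod_zero)
    then show ?thesis by simp
  qed
  have "tensor_apply n A \<psi> (set_encode X) = ?term ?Y + (\<Sum>Y\<in>Pow {..<n} - {?Y}. ?term Y)"
    unfolding tensor_apply_set_encode[OF X] by (rule sum.remove) auto
  also have "(\<Sum>Y\<in>Pow {..<n} - {?Y}. ?term Y) = 0"
    by (intro sum.neutral ballI zero)
  also have "(\<Prod>i<n. A i (i \<in> X) (i \<in> ?Y)) = (\<Prod>i<n. A i (i \<in> X) ((i \<in> X) \<noteq> flip i))"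
    by (rule prod.cong) auto
  finally show ?thesis by simp
qed

section \<open>Symmetric states\<close>

definition sym_state :: "nat \<Rightarrow> (nat \<Rightarrow> complex) \<Rightarrow> qstate" where
  "sym_state n F = (\<lambda>x. if x < 2 ^ n then F (hweight n x) else 0)"

lemma sym_state_set_encode: "A \<subseteq> {..<n} \<Longrightarrow> sym_state n F (set_encode A) = F (card A)"
  by (simp add: sym_state_def set_encode_less_power2 hweight_set_encode)

lemma supported_sym_state: "supported n (sym_state n F)"
  by (simp add: supported_def sym_state_def)

lemma sym_state_cong: "(\<And>w. w \<le> n \<Longrightarrow> F w = G w) \<Longrightarrow> sym_state n F = sym_state n G"
  by (auto simp: sym_state_def hweight_le)

lemma sym_state_lincomb:
  "(\<lambda>x. c * sym_state n F x + d * sym_state n G x) = sym_state n (\<lambda>w. c * F w + d * G w)"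
  by (auto simp: sym_state_def)

lemma dicke_eq_sym_state:
  "dicke n w = sym_state n (\<lambda>m. if m = w then complex_of_real (1 / sqrt (real (n choose w))) else 0)"
  by (auto simp: dicke_def sym_state_def)

lemma sum_Pow_card:
  assumes "finite B"
  shows "(\<Sum>R\<in>Pow B. h (card R)) = (\<Sum>m\<le>card B. of_nat (card B choose m) * h m)"
proof -
  have "(\<Sum>R\<in>Pow B. h (card R)) = (\<Sum>m\<le>card B. \<Sum>R\<in>{R\<in>Pow B. card R = m}. h (card R))"
    by (rule sum.group[symmetric]) (auto simp: assms card_mono)
  also have "\<dots> = (\<Sum>m\<le>card B. of_nat (card B choose m) * h m)"
  proof (rule sum.cong[OF refl])
    fix m
    have "{R\<in>Pow B. card R = m} = {R. R \<subseteq> B \<and> card R = m}" by auto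
    then show "(\<Sum>R\<in>{R\<in>Pow B. card R = m}. h (card R)) = of_nat (card B choose m) * h m"
      by (simp add: n_subsets[OF assms])
  qed
  finally show ?thesis .
qed

lemma qinner_sym_state:
  "qinner n (sym_state n F) (sym_state n G) = (\<Sum>m\<le>n. of_nat (n choose m) * (cnj (F m) * G m))"
proof -
  have "qinner n (sym_state n F) (sym_state n G) = (\<Sum>X\<in>Pow {..<n}. cnj (F (card X)) * G (card X))"
    unfolding qinner_def sum_lessThan_power2_eq_sum_Pow by (simp add: sym_state_set_encode)
  also have "\<dots> = (\<Sum>m\<le>n. of_nat (n choose m) * (cnj (F m) * G m))"
    using sum_Pow_card[of "{..<n}" "\<lambda>m. cnj (F m) * G m"] by simp
  finally show ?thesis .
qed

lemma supported_perm_state: "supported n (perm_state n \<pi> \<psi>)"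
  by (simp add: supported_def perm_state_def)

lemma perm_state_sym_state:
  assumes \<pi>: "bij_betw \<pi> {..<n} {..<n}"
  shows "perm_state n \<pi> (sym_state n G) = sym_state n G"
proof (rule supported_eqI[OF supported_perm_state supported_sym_state])
  fix X assume X: "X \<subseteq> {..<n}"
  let ?Y = "{i. i < n \<and> \<pi> i \<in> X}"
  have "(\<Sum>i<n. if bit (set_encode X) (\<pi> i) then (2::nat) ^ i else 0) =
      (\<Sum>i\<in>{i\<in>{..<n}. \<pi> i \<in> X}. 2 ^ i)"
    using finite_subset[OF X] by (simp add: bit_set_encode sum.inter_filter[symmetric])
  also have "\<dots> = set_encode ?Y"
    by (simp add: set_encode_def)
  finally have "perm_state n \<pi> (sym_state n G) (set_encode X) = sym_state n G (set_encode ?Y)"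
    by (simp add: perm_state_def set_encode_less_power2[OF X])
  also have "\<dots> = G (card ?Y)"
    by (rule sym_state_set_encode) auto
  also have "\<pi> ` ?Y = X"
    using X \<pi> by (auto simp: bij_betw_def)
  then have "card ?Y = card X"
    by (metis (no_types, lifting) \<pi> bij_betw_imp_inj_on card_image inj_on_subset mem_Collect_eq
        lessThan_iff subsetI)
  finally show "perm_state n \<pi> (sym_state n G) (set_encode X) = sym_state n G (set_encode X)"
    by (simp add: sym_state_set_encode[OF X])
qed

lemma prod_lessThan_mem:
  assumes "X \<subseteq> {..<n}"
  shows "(\<Prod>i<n. h (i \<in> X)) = h True ^ card X * h False ^ (n - card X)"
proof -
  have "(\<Prod>i<n. h (i \<in> X)) = (\<Prod>i\<in>{..<n} - X. h (i \<in> X)) * (\<Prod>i\<in>X. h (i \<in> X))"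
    by (rule prod.subset_diff[OF assms]) simp
  also have "\<dots> = (\<Prod>i\<in>{..<n} - X. h False) * (\<Prod>i\<in>X. h True)"
    by (intro arg_cong2[where f = "(*)"] prod.cong) auto
  also have "card ({..<n} - X) = n - card X"
    using assms by (simp add: card_Diff_subset finite_subset)
  ultimately show ?thesis
    by (simp add: mult.commute)
qed

lemma tensor_power_diagonal_sym_state:
  assumes "g False True = 0" "g True False = 0"
  shows "tensor_apply n (\<lambda>_. g) (sym_state n H) =
    sym_state n (\<lambda>w. g True True ^ w * g False False ^ (n - w) * H w)"
proof (rule supported_eqI[OF supported_tensor_apply supported_sym_state])
  fix X assume X: "X \<subseteq> {..<n}"
  have monomial: "g a b = 0" if "i < n" "b \<noteq> (a \<noteq> False)" for i a b
    using that assms by (cases a; cases b) auto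
  have "{i. i < n \<and> (i \<in> X) \<noteq> False} = X"
    using X by auto
  then have "tensor_apply n (\<lambda>_. g) (sym_state n H) (set_encode X) = (\<Prod>i<n. g (i \<in> X) (i \<in> X)) * H (card X)"
    using tensor_apply_monomial[where A = "\<lambda>_. g" and flip = "\<lambda>_. False", OF X monomial] by (simp add: sym_state_set_encode X)
  then show "tensor_apply n (\<lambda>_. g) (sym_state n H) (set_encode X) =
      sym_state n (\<lambda>w. g True True ^ w * g False False ^ (n - w) * H w) (set_encode X)"
    using prod_lessThan_mem[OF X, of "\<lambda>b. g b b"] by (simp add: sym_state_set_encode X)
qed

lemma tensor_power_antidiagonal_sym_state:
  assumes "g False False = 0" "g True True = 0"
  shows "tensor_apply n (\<lambda>_. g) (sym_state n H) =
    sym_state n (\<lambda>w. g True False ^ w * g False True ^ (n - w) * H (n - w))"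
proof (rule supported_eqI[OF supported_tensor_apply supported_sym_state])
  fix X assume X: "X \<subseteq> {..<n}"
  have monomial: "g a b = 0" if "i < n" "b \<noteq> (a \<noteq> True)" for i a b
    using that assms by (cases a; cases b) auto
  have "{i. i < n \<and> (i \<in> X) \<noteq> True} = {..<n} - X"
    by auto
  moreover have "card ({..<n} - X) = n - card X"
    using X by (simp add: card_Diff_subset finite_subset)
  ultimately have "tensor_apply n (\<lambda>_. g) (sym_state n H) (set_encode X) =
      (\<Prod>i<n. g (i \<in> X) (i \<notin> X)) * H (n - card X)"
    using tensor_apply_monomial[where A = "\<lambda>_. g" and flip = "\<lambda>_. True", OF X monomial] by (simp add: sym_state_set_encode)
  then show "tensor_apply n (\<lambda>_. g) (sym_state n H) (set_encode X) =
      sym_state n (\<lambda>w. g True False ^ w * g False True ^ (n - w) * H (n - w)) (set_encode X)"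
    using prod_lessThan_mem[OF X, of "\<lambda>b. g b (\<not> b)"] by (simp add: sym_state_set_encode X)
qed

section \<open>Operators acting on few qubits\<close>

lemma sum_Pow_Un_disjoint:
  assumes "B \<inter> Q = {}"
  shows "(\<Sum>X\<in>Pow (B \<union> Q). h X) = (\<Sum>R\<in>Pow B. \<Sum>S\<in>Pow Q. h (R \<union> S))"
proof -
  have "bij_betw (\<lambda>(R, S). R \<union> S) (Pow B \<times> Pow Q) (Pow (B \<union> Q))"
    by (rule bij_betw_byWitness[where f' = "\<lambda>X. (X \<inter> B, X \<inter> Q)"]) (use assms in auto)
  then show ?thesis
    by (simp add: sum.cartesian_product sum.reindex_bij_betw[symmetric] split_def)
qed

lemma prod_local_operator:
  fixes A :: "nat \<Rightarrow> mat2"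
  assumes Q: "Q \<subseteq> {..<n}"
    and id: "\<And>i. i < n \<Longrightarrow> i \<notin> Q \<Longrightarrow> A i = (\<lambda>a b. if a = b then 1 else 0)"
    and R: "R \<subseteq> {..<n} - Q" "R' \<subseteq> {..<n} - Q" and ST: "S \<subseteq> Q" "T \<subseteq> Q"
  shows "(\<Prod>i<n. A i (i \<in> R \<union> S) (i \<in> R' \<union> T)) =
    (if R' = R then \<Prod>i\<in>Q. A i (i \<in> S) (i \<in> T) else 0)"
proof (cases "R' = R")
  case True
  have "(\<Prod>i<n. A i (i \<in> R \<union> S) (i \<in> R' \<union> T)) =
      (\<Prod>i\<in>{..<n} - Q. A i (i \<in> R \<union> S) (i \<in> R' \<union> T)) * (\<Prod>i\<in>Q. A i (i \<in> R \<union> S) (i \<in> R' \<union> T))"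
    by (rule prod.subset_diff[OF Q]) simp
  also have "(\<Prod>i\<in>{..<n} - Q. A i (i \<in> R \<union> S) (i \<in> R' \<union> T)) = 1"
    using True ST by (intro prod.neutral) (auto simp: id)
  also have "(\<Prod>i\<in>Q. A i (i \<in> R \<union> S) (i \<in> R' \<union> T)) = (\<Prod>i\<in>Q. A i (i \<in> S) (i \<in> T))"
  proof (rule prod.cong[OF refl])
    fix i assume "i \<in> Q"
    with R have "i \<notin> R" "i \<notin> R'" by auto
    then show "A i (i \<in> R \<union> S) (i \<in> R' \<union> T) = A i (i \<in> S) (i \<in> T)" by simp
  qed
  finally show ?thesis using True by simp
next
  case False
  then obtain i where i: "i \<in> {..<n} - Q" "(i \<in> R) \<noteq> (i \<in> R')"
    using R by blast
  then have "A i (i \<in> R \<union> S) (i \<in> R' \<union> T) = 0"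
    using ST by (auto simp: id)
  with i(1) have "(\<Prod>i<n. A i (i \<in> R \<union> S) (i \<in> R' \<union> T)) = 0"
    by (meson DiffD1 finite_lessThan prod_zero)
  then show ?thesis using False by simp
qed

lemma card_Un_local:
  assumes "Q \<subseteq> {..<n::nat}" "R \<subseteq> {..<n} - Q" "S \<subseteq> Q"
  shows "card (R \<union> S) = card R + card S"
proof (rule card_Un_disjoint)
  show "finite R"
    by (rule finite_subset[OF assms(2)]) auto
  show "finite S"
    using assms(1,3) by (meson finite_lessThan finite_subset)
qed (use assms in auto)

lemma tensor_apply_local_sym_state:
  fixes A :: "nat \<Rightarrow> mat2"
  assumes Q: "Q \<subseteq> {..<n}"
    and id: "\<And>i. i < n \<Longrightarrow> i \<notin> Q \<Longrightarrow> A i = (\<lambda>a b. if a = b then 1 else 0)"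
    and R: "R \<subseteq> {..<n} - Q" and S: "S \<subseteq> Q"
  shows "tensor_apply n A (sym_state n G) (set_encode (R \<union> S)) =
    (\<Sum>T\<in>Pow Q. (\<Prod>i\<in>Q. A i (i \<in> S) (i \<in> T)) * G (card R + card T))"
proof -
  let ?B = "{..<n} - Q"
  let ?rhs = "\<Sum>T\<in>Pow Q. (\<Prod>i\<in>Q. A i (i \<in> S) (i \<in> T)) * G (card R + card T)"
  have split: "?B \<union> Q = {..<n}" "?B \<inter> Q = {}"
    using Q by auto
  have inner: "(\<Sum>T\<in>Pow Q. (\<Prod>i<n. A i (i \<in> R \<union> S) (i \<in> R' \<union> T)) * sym_state n G (set_encode (R' \<union> T)))
      = (if R' = R then ?rhs else 0)" if R': "R' \<in> Pow ?B" for R'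
  proof -
    have "(\<Sum>T\<in>Pow Q. (\<Prod>i<n. A i (i \<in> R \<union> S) (i \<in> R' \<union> T)) * sym_state n G (set_encode (R' \<union> T)))
      = (\<Sum>T\<in>Pow Q. if R' = R then (\<Prod>i\<in>Q. A i (i \<in> S) (i \<in> T)) * G (card R + card T) else 0)"
    proof (rule sum.cong[OF refl])
      fix T assume T: "T \<in> Pow Q"
      have "R' \<union> T \<subseteq> {..<n}"
        using R' T Q by auto
      then show "(\<Prod>i<n. A i (i \<in> R \<union> S) (i \<in> R' \<union> T)) * sym_state n G (set_encode (R' \<union> T)) =
          (if R' = R then (\<Prod>i\<in>Q. A i (i \<in> S) (i \<in> T)) * G (card R + card T) else 0)"
        using R' T prod_local_operator[OF Q id R, where R'=R' and S=S and T=T] S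
          card_Un_local[OF Q, where R=R' and S=T]
        by (auto simp: sym_state_set_encode)
    qed
    also have "\<dots> = (if R' = R then ?rhs else 0)"
      by simp
    finally show ?thesis .
  qed
  have "tensor_apply n A (sym_state n G) (set_encode (R \<union> S)) =
      (\<Sum>Y\<in>Pow (?B \<union> Q). (\<Prod>i<n. A i (i \<in> R \<union> S) (i \<in> Y)) * sym_state n G (set_encode Y))"
    unfolding split(1) using R S Q by (intro tensor_apply_set_encode) auto
  also have "\<dots> = (\<Sum>R'\<in>Pow ?B. \<Sum>T\<in>Pow Q.
      (\<Prod>i<n. A i (i \<in> R \<union> S) (i \<in> R' \<union> T)) * sym_state n G (set_encode (R' \<union> T)))"
    by (rule sum_Pow_Un_disjoint[OF split(2)])
  also have "\<dots> = (\<Sum>R'\<in>Pow ?B. if R' = R then ?rhs else 0)"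
    using inner by (rule sum.cong[OF refl])
  also have "\<dots> = ?rhs"
    using R by simp
  finally show ?thesis .
qed

lemma qinner_sym_state_local_operator:
  fixes A :: "nat \<Rightarrow> mat2"
  assumes Q: "Q \<subseteq> {..<n}"
    and id: "\<And>i. i < n \<Longrightarrow> i \<notin> Q \<Longrightarrow> A i = (\<lambda>a b. if a = b then 1 else 0)"
  shows "qinner n (sym_state n F) (tensor_apply n A (sym_state n G)) =
    (\<Sum>S\<in>Pow Q. \<Sum>T\<in>Pow Q. (\<Prod>i\<in>Q. A i (i \<in> S) (i \<in> T)) *
      (\<Sum>m\<le>n - card Q. of_nat ((n - card Q) choose m) * (cnj (F (m + card S)) * G (m + card T))))"
proof -
  let ?B = "{..<n} - Q"
  let ?A = "\<lambda>S T. \<Prod>i\<in>Q. A i (i \<in> S) (i \<in> T)"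
  let ?FG = "\<lambda>S T R. cnj (F (card R + card S)) * G (card R + card T)"
  have split: "?B \<union> Q = {..<n}" "?B \<inter> Q = {}"
    using Q by auto
  have card_B: "card ?B = n - card Q"
    using Q by (simp add: card_Diff_subset finite_subset)
  have "qinner n (sym_state n F) (tensor_apply n A (sym_state n G)) =
      (\<Sum>X\<in>Pow (?B \<union> Q). cnj (sym_state n F (set_encode X)) * tensor_apply n A (sym_state n G) (set_encode X))"
    unfolding qinner_def sum_lessThan_power2_eq_sum_Pow split(1) ..
  also have "\<dots> = (\<Sum>R\<in>Pow ?B. \<Sum>S\<in>Pow Q.
      cnj (sym_state n F (set_encode (R \<union> S))) * tensor_apply n A (sym_state n G) (set_encode (R \<union> S)))"
    by (rule sum_Pow_Un_disjoint[OF split(2)])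
  also have "\<dots> = (\<Sum>R\<in>Pow ?B. \<Sum>S\<in>Pow Q. \<Sum>T\<in>Pow Q. ?A S T * ?FG S T R)"
  proof (intro sum.cong refl)
    fix R S assume RS: "R \<in> Pow ?B" "S \<in> Pow Q"
    then have "R \<union> S \<subseteq> {..<n}"
      using Q by auto
    then show "cnj (sym_state n F (set_encode (R \<union> S))) * tensor_apply n A (sym_state n G) (set_encode (R \<union> S)) =
        (\<Sum>T\<in>Pow Q. ?A S T * ?FG S T R)"
      using RS tensor_apply_local_sym_state[OF Q id, where R=R and S=S and G=G] card_Un_local[OF Q, of R S]
      by (simp add: sym_state_set_encode sum_distrib_left mult_ac)
  qed
  also have "\<dots> = (\<Sum>S\<in>Pow Q. \<Sum>R\<in>Pow ?B. \<Sum>T\<in>Pow Q. ?A S T * ?FG S T R)"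
    by (rule sum.swap)
  also have "\<dots> = (\<Sum>S\<in>Pow Q. \<Sum>T\<in>Pow Q. ?A S T * (\<Sum>R\<in>Pow ?B. ?FG S T R))"
    by (simp add: sum.swap[of _ "Pow ?B"] sum_distrib_left)
  also have "\<dots> = (\<Sum>S\<in>Pow Q. \<Sum>T\<in>Pow Q. ?A S T *
      (\<Sum>m\<le>n - card Q. of_nat ((n - card Q) choose m) * (cnj (F (m + card S)) * G (m + card T))))"
    using sum_Pow_card[of ?B "\<lambda>k. cnj (F (k + card _)) * G (k + card _)"] card_B
    by (intro sum.cong refl arg_cong2[where f = "(*)"]) simp_all
  finally show ?thesis .
qed

section \<open>The weight kernel\<close>

text \<open>\<open>weight_kernel N f g s t\<close> is the contribution of the \<open>N\<close> qubits outside the support of an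
  error to a matrix element between symmetric states with weight profiles \<open>f\<close> and \<open>g\<close>, when the
  basis states on the support have weights \<open>s\<close> and \<open>t\<close>.\<close>
definition weight_kernel :: "nat \<Rightarrow> (nat \<Rightarrow> real) \<Rightarrow> (nat \<Rightarrow> real) \<Rightarrow> nat \<Rightarrow> nat \<Rightarrow> real" where
  "weight_kernel N f g s t = (\<Sum>m\<le>N. real (N choose m) * (f (m + s) * g (m + t)))"

lemma weight_kernel_bilinear:
  "(\<Sum>m\<le>N. of_nat (N choose m) *
      (cnj (c0 * of_real (f0 (m + s)) + c1 * of_real (f1 (m + s))) *
       (d0 * of_real (f0 (m + t)) + d1 * of_real (f1 (m + t))))) =
   cnj c0 * d0 * of_real (weight_kernel N f0 f0 s t) + cnj c0 * d1 * of_real (weight_kernel N f0 f1 s t) +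
   cnj c1 * d0 * of_real (weight_kernel N f1 f0 s t) + cnj c1 * d1 * of_real (weight_kernel N f1 f1 s t)"
  unfolding weight_kernel_def of_real_sum sum_distrib_left sum.distrib[symmetric]
  by (intro sum.cong refl) (simp add: algebra_simps)

lemma sum_choose_spike_product:
  "(\<Sum>m\<le>N. real (N choose m) * ((if m + s = u then x else 0) * (if m + t = v then y else 0))) =
   (if s \<le> u \<and> u - s \<le> N \<and> u + t = v + s then real (N choose (u - s)) * (x * y) else 0)"
proof -
  have "(\<Sum>m\<le>N. real (N choose m) * ((if m + s = u then x else 0) * (if m + t = v then y else 0))) =
      (\<Sum>m\<le>N. if m = u - s then (if s \<le> u \<and> u + t = v + s then real (N choose m) * (x * y) else 0) else 0)"
    by (intro sum.cong refl) auto
  then show ?thesis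
    by (auto simp: sum.delta)
qed

lemma weight_kernel_two_spikes:
  "weight_kernel N (\<lambda>w. (if w = u1 then x1 else 0) + (if w = u2 then x2 else 0))
       (\<lambda>w. (if w = v1 then y1 else 0) + (if w = v2 then y2 else 0)) s t =
   (if s \<le> u1 \<and> u1 - s \<le> N \<and> u1 + t = v1 + s then real (N choose (u1 - s)) * (x1 * y1) else 0) +
   (if s \<le> u1 \<and> u1 - s \<le> N \<and> u1 + t = v2 + s then real (N choose (u1 - s)) * (x1 * y2) else 0) +
   (if s \<le> u2 \<and> u2 - s \<le> N \<and> u2 + t = v1 + s then real (N choose (u2 - s)) * (x2 * y1) else 0) +
   (if s \<le> u2 \<and> u2 - s \<le> N \<and> u2 + t = v2 + s then real (N choose (u2 - s)) * (x2 * y2) else 0)"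
  unfolding weight_kernel_def sum_choose_spike_product[symmetric] sum.distrib[symmetric]
  by (intro sum.cong refl) (simp add: algebra_simps)

lemma real_choose_two: "real (N choose 2) = real N * (real N - 1) / 2"
  by (induction N) (simp_all add: numeral_2_eq_2 field_simps)

lemma real_choose_three: "real (N choose 3) = real N * (real N - 1) * (real N - 2) / 6"
proof (induction N)
  case (Suc N)
  have "Suc N choose 3 = (N choose 2) + (N choose 3)"
    by (simp add: numeral_3_eq_3 numeral_2_eq_2)
  then show ?case
    using Suc real_choose_two[of N] by (simp add: field_simps)
qed simp

section \<open>A family of permutation-invariant codes\<close>

text \<open>\<open>profile0 a b M w\<close> is the amplitude of a weight-\<open>w\<close> basis state in
  \<open>a |D_0> + b sqrt (C (M + 3) M) |D_M>\<close>, and \<open>profile1 a b M\<close> the one of its bit-flip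
  \<open>b sqrt (C (M + 3) 3) |D_3> + a |D_(M+3)>\<close>.\<close>
definition profile0 :: "real \<Rightarrow> real \<Rightarrow> nat \<Rightarrow> nat \<Rightarrow> real" where
  "profile0 a b M w = (if w = 0 then a else 0) + (if w = M then b else 0)"

definition profile1 :: "real \<Rightarrow> real \<Rightarrow> nat \<Rightarrow> nat \<Rightarrow> real" where
  "profile1 a b M w = (if w = 3 then b else 0) + (if w = M + 3 then a else 0)"

text \<open>The values of \<open>a * a\<close> and \<open>b * b\<close> are forced by normalisation together with the diagonal
  Knill-Laflamme condition for single-qubit errors.\<close>
locale dicke_code =
  fixes a b :: real and M :: nat
  assumes M_ge_8: "8 \<le> M"
    and a_squared: "a * a = (real M - 3) / (2 * real M)"
    and b_squared: "b * b = 3 / (real M * (real M + 1) * (real M + 2))"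
begin

lemma a_nonzero: "a \<noteq> 0"
  using a_squared M_ge_8 by auto

lemma b_nonzero: "b \<noteq> 0"
  using b_squared M_ge_8 by auto

lemma amplitude_identities:
  "a * a + real (M + 2 choose 2) * (b * b) = real (M + 2 choose 3) * (b * b)"
  "a * a + real (M + 1 choose 1) * (b * b) = real (M + 1 choose 3) * (b * b)"
  "a * a + real (M + 3 choose 3) * (b * b) = 1"
proof -
  define x where "x = real M"
  have x: "x \<ge> 8"
    using M_ge_8 by (simp add: x_def)
  then have A: "a * a * (2 * x) = x - 3"
    using a_squared by (simp add: x_def field_simps)
  from x have "x * (x + 1) * (x + 2) \<noteq> 0"
    by (simp add: add_nonneg_eq_0_iff)
  then have B: "b * b * (x * (x + 1) * (x + 2)) = 3"
    using b_squared by (simp add: x_def field_simps)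
  have choose: "real (M + k choose 2) = (x + k) * (x + k - 1) / 2"
    "real (M + k choose 3) = (x + k) * (x + k - 1) * (x + k - 2) / 6" for k :: nat
    unfolding real_choose_two real_choose_three x_def by simp_all
  have "x \<noteq> 0"
    using x by simp
  then show "a * a + real (M + 2 choose 2) * (b * b) = real (M + 2 choose 3) * (b * b)"
    "a * a + real (M + 1 choose 1) * (b * b) = real (M + 1 choose 3) * (b * b)"
    "a * a + real (M + 3 choose 3) * (b * b) = 1"
    using A B choose[of 1] choose[of 2] choose[of 3] by (simp_all add: x_def[symmetric]) algebra+
qed

lemma weight_kernel_cross:
  assumes "s \<le> 2" "t \<le> 2"
  shows "weight_kernel N (profile0 a b M) (profile1 a b M) s t = 0"
    and "weight_kernel N (profile1 a b M) (profile0 a b M) s t = 0"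
  unfolding profile0_def profile1_def weight_kernel_two_spikes using assms M_ge_8 by auto

lemma weight_kernel_off_diagonal:
  assumes "s \<le> 2" "t \<le> 2" "s \<noteq> t"
  shows "weight_kernel N (profile0 a b M) (profile0 a b M) s t = 0"
    and "weight_kernel N (profile1 a b M) (profile1 a b M) s t = 0"
  unfolding profile0_def profile1_def weight_kernel_two_spikes using assms M_ge_8 by auto

lemma weight_kernel_diagonal:
  assumes "q \<le> 2" "s \<le> q"
  shows "weight_kernel (M + 3 - q) (profile1 a b M) (profile1 a b M) s s =
    weight_kernel (M + 3 - q) (profile0 a b M) (profile0 a b M) s s"
proof -
  have "M + 3 - q - (M - s) = 3 + s - q"
    using assms M_ge_8 by simp
  then have sym: "(M + 3 - q) choose (M - s) = (M + 3 - q) choose (3 + s - q)"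
    using assms M_ge_8 binomial_symmetric[of "M - s" "M + 3 - q"] by simp
  consider "q = 0" "s = 0" | "q = 1" "s = 0" | "q = 1" "s = 1" | "q = 2" "s = 0" | "q = 2" "s = 1"
    | "q = 2" "s = 2"
    using assms by linarith
  then show ?thesis
    unfolding profile0_def profile1_def weight_kernel_two_spikes
    using sym amplitude_identities M_ge_8 by cases simp_all
qed

lemma weight_kernel_norm: "weight_kernel (M + 3) (profile0 a b M) (profile0 a b M) 0 0 = 1"
proof -
  have "M + 3 choose M = M + 3 choose 3"
    using binomial_symmetric[of M "M + 3"] by simp
  then show ?thesis
    unfolding profile0_def weight_kernel_two_spikes using amplitude_identities(3) M_ge_8 by simp
qed

definition code_profile :: "complex \<Rightarrow> complex \<Rightarrow> nat \<Rightarrow> complex" where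
  "code_profile c0 c1 = (\<lambda>w. c0 * of_real (profile0 a b M w) + c1 * of_real (profile1 a b M w))"

definition code_state :: "complex \<Rightarrow> complex \<Rightarrow> qstate" where
  "code_state c0 c1 = sym_state (M + 3) (code_profile c0 c1)"

lemma sum_code_profile:
  assumes "q \<le> 2" "s \<le> q" "t \<le> q"
  shows "(\<Sum>m\<le>M + 3 - q. of_nat ((M + 3 - q) choose m) *
      (cnj (code_profile c0 c1 (m + s)) * code_profile d0 d1 (m + t))) =
    (cnj c0 * d0 + cnj c1 * d1) * of_real (weight_kernel (M + 3 - q) (profile0 a b M) (profile0 a b M) s t)"
proof -
  have "weight_kernel (M + 3 - q) (profile1 a b M) (profile1 a b M) s t =
      weight_kernel (M + 3 - q) (profile0 a b M) (profile0 a b M) s t"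
    using assms weight_kernel_diagonal weight_kernel_off_diagonal by (cases "s = t") auto
  then show ?thesis
    unfolding code_profile_def weight_kernel_bilinear
    using assms weight_kernel_cross by (simp add: algebra_simps)
qed

lemma qinner_code_state: "qinner (M + 3) (code_state c0 c1) (code_state d0 d1) = cnj c0 * d0 + cnj c1 * d1"
  using sum_code_profile[of 0 0 0] weight_kernel_norm by (simp add: code_state_def qinner_sym_state)

lemma qinner_pauli_code_state:
  assumes "pauli_weight (M + 3) p < 3"
  obtains e where "\<And>c0 c1 d0 d1. qinner (M + 3) (code_state c0 c1) (pauli_op (M + 3) p (code_state d0 d1)) =
    e * (cnj c0 * d0 + cnj c1 * d1)"
proof -
  define Q where "Q = {i. i < M + 3 \<and> p i \<noteq> 0}"
  have Q: "Q \<subseteq> {..<M + 3}" and card_Q: "card Q \<le> 2"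
    using assms by (auto simp: Q_def pauli_weight_def)
  have id: "pauli1 (p i) = (\<lambda>a b. if a = b then 1 else 0)" if "i < M + 3" "i \<notin> Q" for i
    using that by (auto simp: Q_def pauli1_def fun_eq_iff)
  have card_S: "card S \<le> card Q" if "S \<in> Pow Q" for S
    using that Q by (auto intro: card_mono finite_subset)
  define e where "e = (\<Sum>S\<in>Pow Q. \<Sum>T\<in>Pow Q. (\<Prod>i\<in>Q. pauli1 (p i) (i \<in> S) (i \<in> T)) *
    of_real (weight_kernel (M + 3 - card Q) (profile0 a b M) (profile0 a b M) (card S) (card T)))"
  have expand: "qinner (M + 3) (code_state c0 c1) (pauli_op (M + 3) p (code_state d0 d1)) =
      (\<Sum>S\<in>Pow Q. \<Sum>T\<in>Pow Q. (\<Prod>i\<in>Q. pauli1 (p i) (i \<in> S) (i \<in> T)) *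
        (\<Sum>m\<le>M + 3 - card Q. of_nat ((M + 3 - card Q) choose m) *
          (cnj (code_profile c0 c1 (m + card S)) * code_profile d0 d1 (m + card T))))"
    for c0 c1 d0 d1
    unfolding code_state_def pauli_op_def by (rule qinner_sym_state_local_operator[OF Q id])
  have collapse: "(\<Sum>S\<in>Pow Q. \<Sum>T\<in>Pow Q. (\<Prod>i\<in>Q. pauli1 (p i) (i \<in> S) (i \<in> T)) *
        (\<Sum>m\<le>M + 3 - card Q. of_nat ((M + 3 - card Q) choose m) *
          (cnj (code_profile c0 c1 (m + card S)) * code_profile d0 d1 (m + card T)))) =
      e * (cnj c0 * d0 + cnj c1 * d1)" for c0 c1 d0 d1
  proof -
    have "(\<Sum>m\<le>M + 3 - card Q. of_nat ((M + 3 - card Q) choose m) *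
          (cnj (code_profile c0 c1 (m + card S)) * code_profile d0 d1 (m + card T))) =
        (cnj c0 * d0 + cnj c1 * d1) *
          of_real (weight_kernel (M + 3 - card Q) (profile0 a b M) (profile0 a b M) (card S) (card T))"
      if "S \<in> Pow Q" "T \<in> Pow Q" for S T
      using sum_code_profile[OF card_Q card_S card_S] that by simp
    then show ?thesis
      unfolding e_def sum_distrib_right by (intro sum.cong refl) (simp add: mult_ac)
  qed
  show ?thesis
    by (rule that) (simp only: expand collapse)
qed

lemma code_state_lincomb: "(\<lambda>x. c0 * code_state 1 0 x + c1 * code_state 0 1 x) = code_state c0 c1"
  by (simp add: code_state_def code_profile_def[abs_def] sym_state_lincomb)

lemma supported_code_state: "supported (M + 3) (code_state c0 c1)"
  by (simp add: code_state_def supported_sym_state)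

lemma code_state_set_encode: "X \<subseteq> {..<M + 3} \<Longrightarrow> code_state c0 c1 (set_encode X) = code_profile c0 c1 (card X)"
  by (simp add: code_state_def sym_state_set_encode)

lemma cspan_list_code_basis: "cspan_list [code_state 1 0, code_state 0 1] = {code_state c0 c1 | c0 c1. True}"
proof -
  have "(\<lambda>x. \<Sum>j<length [code_state 1 0, code_state 0 1]. f j * ([code_state 1 0, code_state 0 1] ! j) x) =
      (\<lambda>x. f 0 * code_state 1 0 x + f 1 * code_state 0 1 x)" for f
    by (simp add: numeral_2_eq_2)
  then have "(\<lambda>x. \<Sum>j<length [code_state 1 0, code_state 0 1]. f j * ([code_state 1 0, code_state 0 1] ! j) x) =
      code_state (f 0) (f 1)" for f
    by (simp only: code_state_lincomb)
  moreover have "\<exists>f. code_state c0 c1 = code_state (f (0::nat)) (f 1)" for c0 c1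
    by (rule exI[where x = "\<lambda>j::nat. if j = 0 then c0 else c1"]) simp
  ultimately show ?thesis
    unfolding cspan_list_def by auto
qed

lemma orthonormal_code_basis: "orthonormal_list (M + 3) [code_state 1 0, code_state 0 1]"
  by (auto simp: orthonormal_list_def less_Suc_eq qinner_code_state supported_code_state)

theorem qcode_code_space: "qcode (M + 3) 2 3 (cspan_list [code_state 1 0, code_state 0 1])"
  unfolding qcode_def
proof (intro conjI allI impI)
  show "\<exists>B. length B = 2 \<and> orthonormal_list (M + 3) B \<and>
      cspan_list [code_state 1 0, code_state 0 1] = cspan_list B"
    using orthonormal_code_basis by (intro exI[of _ "[code_state 1 0, code_state 0 1]"]) simp
  fix p assume "pauli_string (M + 3) p \<and> pauli_weight (M + 3) p < 3"
  then obtain e where "\<And>c0 c1 d0 d1. qinner (M + 3) (code_state c0 c1) (pauli_op (M + 3) p (code_state d0 d1)) =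
      e * (cnj c0 * d0 + cnj c1 * d1)"
    using qinner_pauli_code_state by blast
  then show "\<exists>e. \<forall>\<phi>\<in>cspan_list [code_state 1 0, code_state 0 1]. \<forall>\<psi>\<in>cspan_list [code_state 1 0, code_state 0 1].
      qinner (M + 3) \<phi> (pauli_op (M + 3) p \<psi>) = e * qinner (M + 3) \<phi> \<psi>"
    unfolding cspan_list_code_basis by (auto simp: qinner_code_state)
qed

theorem perm_invariant_code_space: "perm_invariant (M + 3) (cspan_list [code_state 1 0, code_state 0 1])"
  unfolding perm_invariant_def cspan_list_code_basis by (auto simp: code_state_def perm_state_sym_state)

end

section \<open>Transversality\<close>

text \<open>On monomial matrices the entrywise power is multiplicative. The condition on \<open>M\<close>-th powers
  is what makes the tensor power of \<open>g\<close> act on the codewords through the entrywise \<open>(M + 3)\<close>-th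
  power.\<close>
definition root_monomials :: "nat \<Rightarrow> mat2 set" where
  "root_monomials M = {g.
     (g False True = 0 \<and> g True False = 0 \<and> g False False ^ (2 * M) = 1 \<and> g True True ^ (2 * M) = 1 \<and>
        g False False ^ M = g True True ^ M) \<or>
     (g False False = 0 \<and> g True True = 0 \<and> g False True ^ (2 * M) = 1 \<and> g True False ^ (2 * M) = 1 \<and>
        g False True ^ M = g True False ^ M)}"

lemma mmul_root_monomials: "g \<in> root_monomials M \<Longrightarrow> h \<in> root_monomials M \<Longrightarrow> mmul g h \<in> root_monomials M"
  unfolding root_monomials_def mmul_def by (auto simp: power_mult_distrib)

lemma root_monomials_entry: "g \<in> root_monomials M \<Longrightarrow> g x y = 0 \<or> g x y ^ (2 * M) = 1"
  unfolding root_monomials_def by (cases x; cases y) auto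

lemma quatgroup_subset_root_monomials:
  assumes "2 \<le> r"
  shows "quatgroup r \<subseteq> root_monomials (2 ^ r)"
proof -
  have "r = (r - 2) + 2"
    using assms by simp
  then have "(2::nat) ^ r = 2 ^ (r - 2) * 2 ^ 2"
    by (metis power_add)
  then obtain k where k: "(2::nat) ^ r = 4 * k"
    by simp
  have i_powers: "\<i> ^ (4 * k) = 1" "(- \<i>) ^ (4 * k) = 1" "\<i> ^ (2 * (4 * k)) = 1" "(- \<i>) ^ (2 * (4 * k)) = 1"
    by (simp_all add: power_mult)
  have "sfX \<in> root_monomials (2 ^ r)" "sfZ \<in> root_monomials (2 ^ r)"
    unfolding root_monomials_def sfX_def sfZ_def k using i_powers by simp_all
  moreover have "sfPh (2 * pi / 2 ^ r) \<in> root_monomials (2 ^ r)"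
  proof -
    have "cis (- (2 * pi / 2 ^ r) / 2) ^ (2 * 2 ^ r) = 1" "cis ((2 * pi / 2 ^ r) / 2) ^ (2 * 2 ^ r) = 1"
      "cis (- (2 * pi / 2 ^ r) / 2) ^ (2 ^ r) = -1" "cis ((2 * pi / 2 ^ r) / 2) ^ (2 ^ r) = -1"
      by (simp_all add: DeMoivre complex_eq_iff)
    then show ?thesis
      unfolding root_monomials_def sfPh_def by simp
  qed
  ultimately have generators: "{sfX, sfZ, sfPh (2 * pi / 2 ^ r)} \<subseteq> root_monomials (2 ^ r)"
    by simp
  show ?thesis
  proof
    fix g assume "g \<in> quatgroup r"
    then show "g \<in> root_monomials (2 ^ r)"
      unfolding quatgroup_def
      by (induction rule: mgen.induct) (use generators mmul_root_monomials in auto)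
  qed
qed

definition entrywise_power :: "nat \<Rightarrow> mat2 \<Rightarrow> mat2" where
  "entrywise_power n g = (\<lambda>x y. g x y ^ n)"

lemma entrywise_power_mmul:
  assumes "0 < n" "g \<in> root_monomials M" "h \<in> root_monomials M"
  shows "entrywise_power n (mmul g h) = mmul (entrywise_power n g) (entrywise_power n h)"
proof (intro ext)
  fix x y
  show "entrywise_power n (mmul g h) x y = mmul (entrywise_power n g) (entrywise_power n h) x y"
    using assms unfolding root_monomials_def mmul_def entrywise_power_def
    by (cases x; cases y) (auto simp: power_mult_distrib zero_power)
qed

lemma mdet_entrywise_power:
  assumes "0 < n" "0 < M" "g \<in> root_monomials M"
  shows "mdet (entrywise_power n g) \<noteq> 0"
  using assms unfolding root_monomials_def mdet_def entrywise_power_def by (auto simp: zero_power)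

lemma eq_if_power_eq_roots_of_unity:
  fixes z w :: complex
  assumes "coprime n m" "z ^ m = 1" "w ^ m = 1" "z ^ n = w ^ n"
  shows "z = w"
proof -
  obtain s where "[n * s = 1] (mod m)"
    using cong_solve_coprime_nat[OF assms(1)] by auto
  then have s: "(n * s) mod m = 1 mod m"
    by (simp add: cong_def)
  have power_mod: "u ^ k = u ^ (k mod m)" if "u ^ m = 1" for u :: complex and k
  proof -
    have "u ^ k = (u ^ m) ^ (k div m) * u ^ (k mod m)"
      by (simp only: power_mult[symmetric] power_add[symmetric] mult_div_mod_eq)
    with that show ?thesis
      by simp
  qed
  have inverse_exponent: "u ^ (n * s) = u" if "u ^ m = 1" for u :: complex
  proof -
    have "u ^ (n * s) = u ^ (1 mod m)"
      by (simp only: power_mod[OF that, of "n * s"] s)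
    also have "\<dots> = u ^ 1"
      by (rule power_mod[OF that, symmetric])
    finally show ?thesis
      by simp
  qed
  have "z = (z ^ n) ^ s"
    by (simp only: power_mult[symmetric] inverse_exponent[OF assms(2)])
  also have "\<dots> = w"
    by (simp only: assms(4) power_mult[symmetric] inverse_exponent[OF assms(3)])
  finally show ?thesis .
qed

lemma inj_on_entrywise_power:
  assumes "0 < n" "coprime n (2 * M)"
  shows "inj_on (entrywise_power n) (root_monomials M)"
proof (rule inj_onI)
  fix g h assume g: "g \<in> root_monomials M" and h: "h \<in> root_monomials M"
    and eq: "entrywise_power n g = entrywise_power n h"
  show "g = h"
  proof (intro ext)
    fix x y
    have power_eq: "g x y ^ n = h x y ^ n"
      using fun_cong[OF fun_cong[OF eq, of x], of y] by (simp add: entrywise_power_def)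
    show "g x y = h x y"
    proof (cases "g x y = 0 \<or> h x y = 0")
      case True
      with power_eq \<open>0 < n\<close> show ?thesis
        by (auto simp: zero_power)
    next
      case False
      then show ?thesis
        using root_monomials_entry[OF g, of x y] root_monomials_entry[OF h, of x y]
          eq_if_power_eq_roots_of_unity[OF assms(2) _ _ power_eq]
        by blast
    qed
  qed
qed

lemma no_common_eigenvector_entrywise_power:
  assumes "odd n" "sfX \<in> G" "sfZ \<in> G"
  shows "\<not> (\<exists>v. v \<noteq> (\<lambda>_. 0) \<and> (\<forall>g\<in>G. \<exists>\<mu>. mvec (entrywise_power n g) v = (\<lambda>x. \<mu> * v x)))"
proof
  assume "\<exists>v. v \<noteq> (\<lambda>_. 0) \<and> (\<forall>g\<in>G. \<exists>\<mu>. mvec (entrywise_power n g) v = (\<lambda>x. \<mu> * v x))"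
  then obtain v \<mu> \<nu> where v: "v \<noteq> (\<lambda>_. 0)"
    and Z: "mvec (entrywise_power n sfZ) v = (\<lambda>x. \<mu> * v x)"
    and X: "mvec (entrywise_power n sfX) v = (\<lambda>x. \<nu> * v x)"
    using assms(2,3) by meson
  have minus_i: "(- \<i>) ^ n = - (\<i> ^ n)"
    using assms(1) by (simp add: power_minus_odd)
  have "\<i> ^ n \<noteq> 0"
    by simp
  have "- (\<i> ^ n) * v False = \<mu> * v False" "\<i> ^ n * v True = \<mu> * v True"
    using fun_cong[OF Z, of False] fun_cong[OF Z, of True] minus_i
    by (simp_all add: mvec_def entrywise_power_def sfZ_def zero_power odd_pos[OF assms(1)])
  then have "v False = 0 \<or> v True = 0"
    using \<open>\<i> ^ n \<noteq> 0\<close> by (auto simp: mult_cancel_right)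
  moreover have "- (\<i> ^ n) * v True = \<nu> * v False" "- (\<i> ^ n) * v False = \<nu> * v True"
    using fun_cong[OF X, of False] fun_cong[OF X, of True] minus_i
    by (simp_all add: mvec_def entrywise_power_def sfX_def zero_power odd_pos[OF assms(1)])
  ultimately have "v False = 0" "v True = 0"
    using \<open>\<i> ^ n \<noteq> 0\<close> by auto
  then have "v = (\<lambda>_. 0)"
    by (metis (full_types))
  with v show False ..
qed

lemma faithful_irrep2_entrywise_power:
  assumes "G \<subseteq> root_monomials M" "sfX \<in> G" "sfZ \<in> G" "0 < M" "coprime n (2 * M)"
  shows "faithful_irrep2 G (entrywise_power n)"
proof -
  have "odd n"
    using assms(5) by (simp add: coprime_mult_right_iff)
  then have "0 < n"
    by (rule odd_pos)
  show ?thesis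
    unfolding faithful_irrep2_def
  proof (intro conjI ballI)
    fix g h assume "g \<in> G" "h \<in> G"
    then show "entrywise_power n (mmul g h) = mmul (entrywise_power n g) (entrywise_power n h)"
      using assms(1) entrywise_power_mmul[OF \<open>0 < n\<close>] by blast
  next
    fix g assume "g \<in> G"
    then show "mdet (entrywise_power n g) \<noteq> 0"
      using assms(1,4) mdet_entrywise_power[OF \<open>0 < n\<close>] by blast
  next
    show "inj_on (entrywise_power n) G"
      using inj_on_entrywise_power[OF \<open>0 < n\<close> assms(5)] assms(1) by (rule inj_on_subset)
  qed (rule no_common_eigenvector_entrywise_power[OF \<open>odd n\<close> assms(2,3)])
qed

context dicke_code
begin

lemma tensor_power_code_state:
  assumes g: "g \<in> root_monomials M"
  shows "tensor_apply (M + 3) (\<lambda>_. g) (code_state c0 c1) =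
    code_state (g False False ^ (M + 3) * c0 + g False True ^ (M + 3) * c1)
      (g True False ^ (M + 3) * c0 + g True True ^ (M + 3) * c1)"
proof (cases "g False True = 0 \<and> g True False = 0")
  case True
  with g have equal_powers: "g False False ^ M = g True True ^ M"
    by (auto simp: root_monomials_def)
  have "tensor_apply (M + 3) (\<lambda>_. g) (code_state c0 c1) = sym_state (M + 3)
      (\<lambda>w. g True True ^ w * g False False ^ (M + 3 - w) * code_profile c0 c1 w)"
    unfolding code_state_def using True by (intro tensor_power_diagonal_sym_state) auto
  also have "\<dots> = sym_state (M + 3) (code_profile (g False False ^ (M + 3) * c0) (g True True ^ (M + 3) * c1))"
  proof (rule sym_state_cong)
    fix w
    show "g True True ^ w * g False False ^ (M + 3 - w) * code_profile c0 c1 w =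
        code_profile (g False False ^ (M + 3) * c0) (g True True ^ (M + 3) * c1) w"
      using M_ge_8 equal_powers
      by (cases "w = 0 \<or> w = 3 \<or> w = M \<or> w = M + 3")
        (auto simp: code_profile_def profile0_def profile1_def power_add mult_ac)
  qed
  finally show ?thesis
    using True by (simp add: code_state_def zero_power)
next
  case False
  with g have zero: "g False False = 0" "g True True = 0"
    and equal_powers: "g False True ^ M = g True False ^ M"
    by (auto simp: root_monomials_def)
  have "tensor_apply (M + 3) (\<lambda>_. g) (code_state c0 c1) = sym_state (M + 3)
      (\<lambda>w. g True False ^ w * g False True ^ (M + 3 - w) * code_profile c0 c1 (M + 3 - w))"
    unfolding code_state_def using zero by (rule tensor_power_antidiagonal_sym_state)
  also have "\<dots> = sym_state (M + 3) (code_profile (g False True ^ (M + 3) * c1) (g True False ^ (M + 3) * c0))"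
  proof (rule sym_state_cong)
    fix w assume "w \<le> M + 3"
    then show "g True False ^ w * g False True ^ (M + 3 - w) * code_profile c0 c1 (M + 3 - w) =
        code_profile (g False True ^ (M + 3) * c1) (g True False ^ (M + 3) * c0) w"
      using M_ge_8 equal_powers
      by (cases "w = 0 \<or> w = 3 \<or> w = M \<or> w = M + 3")
        (auto simp: code_profile_def profile0_def profile1_def power_add mult_ac)
  qed
  finally show ?thesis
    using zero by (simp add: code_state_def zero_power)
qed

theorem transversal_code_space:
  assumes "G \<subseteq> root_monomials M" "sfX \<in> G" "sfZ \<in> G" "coprime (M + 3) (2 * M)"
  shows "transversal (M + 3) (\<lambda>j. if j then code_state 0 1 else code_state 1 0) G"
  unfolding transversal_def
proof (intro conjI exI[of _ "entrywise_power (M + 3)"] ballI allI)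
  show "orthonormal_list (M + 3)
      [if False then code_state 0 1 else code_state 1 0, if True then code_state 0 1 else code_state 1 0]"
    using orthonormal_code_basis by simp
  show "faithful_irrep2 G (entrywise_power (M + 3))"
    using assms M_ge_8 by (intro faithful_irrep2_entrywise_power) auto
  fix g j assume "g \<in> G"
  then have "g \<in> root_monomials M"
    using assms(1) by blast
  then show "tensor_apply (M + 3) (\<lambda>_. g) (if j then code_state 0 1 else code_state 1 0) =
      (\<lambda>x. entrywise_power (M + 3) g False j * (if False then code_state 0 1 else code_state 1 0) x +
        entrywise_power (M + 3) g True j * (if True then code_state 0 1 else code_state 1 0) x)"
    by (cases j) (simp_all add: tensor_power_code_state entrywise_power_def code_state_lincomb)
qed

end

section \<open>Non-additivity\<close>

definition basis_state :: "nat \<Rightarrow> qstate" where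
  "basis_state y = (\<lambda>x. if x = y then 1 else 0)"

lemma supported_basis_state: "y < 2 ^ n \<Longrightarrow> supported n (basis_state y)"
  by (simp add: supported_def basis_state_def)

lemma pauli1_monomial: "b \<noteq> (a \<noteq> (k = 1 \<or> k = 2)) \<Longrightarrow> pauli1 k a b = 0"
  unfolding pauli1_def by (cases a; cases b) auto

lemma pauli_op_set_encode:
  assumes "X \<subseteq> {..<n}"
  shows "pauli_op n p \<psi> (set_encode X) =
    (\<Prod>i<n. pauli1 (p i) (i \<in> X) ((i \<in> X) \<noteq> (p i = 1 \<or> p i = 2))) *
      \<psi> (set_encode {i. i < n \<and> (i \<in> X) \<noteq> (p i = 1 \<or> p i = 2)})"
  unfolding pauli_op_def
  using tensor_apply_monomial[where A = "\<lambda>i. pauli1 (p i)" and flip = "\<lambda>i. p i = 1 \<or> p i = 2",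
      OF assms pauli1_monomial] .

lemma pauli_op_diagonal_set_encode:
  assumes no_flip: "\<forall>i<n. p i \<noteq> 1 \<and> p i \<noteq> 2" and X: "X \<subseteq> {..<n}"
  shows "pauli_op n p \<psi> (set_encode X) = (\<Prod>i\<in>X. if p i = 3 then -1 else 1) * \<psi> (set_encode X)"
proof -
  have "{i. i < n \<and> (i \<in> X) \<noteq> (p i = 1 \<or> p i = 2)} = X"
    using no_flip X by auto
  then have "pauli_op n p \<psi> (set_encode X) = (\<Prod>i<n. pauli1 (p i) (i \<in> X) (i \<in> X)) * \<psi> (set_encode X)"
    using pauli_op_set_encode[OF X] no_flip by simp
  also have "(\<Prod>i<n. pauli1 (p i) (i \<in> X) (i \<in> X)) =
      (\<Prod>i\<in>{..<n} - X. pauli1 (p i) False False) * (\<Prod>i\<in>X. pauli1 (p i) True True)"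
    by (subst prod.subset_diff[OF X]) (auto intro!: arg_cong2[where f = "(*)"] prod.cong)
  also have "(\<Prod>i\<in>{..<n} - X. pauli1 (p i) False False) = 1"
    using no_flip by (intro prod.neutral) (auto simp: pauli1_def)
  also have "(\<Prod>i\<in>X. pauli1 (p i) True True) = (\<Prod>i\<in>X. if p i = 3 then -1 else 1)"
    using no_flip X by (intro prod.cong refl) (auto simp: pauli1_def)
  finally show ?thesis
    by simp
qed

context dicke_code
begin

lemma profile0_if_pauli_fixes_code_state_1_0:
  assumes fixed: "\<And>x. c * pauli_op (M + 3) p (code_state 1 0) x = code_state 1 0 x"
    and X: "X \<subseteq> {..<M + 3}"
  shows "of_real (profile0 a b M (card X)) =
    c * (\<Prod>i<M + 3. pauli1 (p i) (i \<in> X) ((i \<in> X) \<noteq> (p i = 1 \<or> p i = 2))) *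
      of_real (profile0 a b M (card {i. i < M + 3 \<and> (i \<in> X) \<noteq> (p i = 1 \<or> p i = 2)}))"
proof -
  let ?Y = "{i. i < M + 3 \<and> (i \<in> X) \<noteq> (p i = 1 \<or> p i = 2)}"
  have "of_real (profile0 a b M (card X)) = code_state 1 0 (set_encode X)"
    using X by (simp add: code_state_set_encode code_profile_def)
  also have "\<dots> = c * pauli_op (M + 3) p (code_state 1 0) (set_encode X)"
    using fixed by simp
  also have "\<dots> = c * ((\<Prod>i<M + 3. pauli1 (p i) (i \<in> X) ((i \<in> X) \<noteq> (p i = 1 \<or> p i = 2))) *
      code_state 1 0 (set_encode ?Y))"
    by (simp only: pauli_op_set_encode[OF X])
  also have "code_state 1 0 (set_encode ?Y) = of_real (profile0 a b M (card ?Y))"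
    by (subst code_state_set_encode) (auto simp: code_profile_def)
  finally show ?thesis
    by (simp only: mult.assoc)
qed

text \<open>A Pauli operator flipping the qubits in a nonempty set \<open>F\<close> maps weight \<open>0\<close> to weight \<open>|F|\<close>, so
  it can only fix the codeword \<open>|0>\<close> if \<open>|F| = M\<close>; but then it maps some weight-\<open>M\<close> basis state to
  a weight-\<open>2\<close> one.\<close>
lemma no_flip_if_fixes_code_state_1_0:
  assumes fixed: "\<And>x. c * pauli_op (M + 3) p (code_state 1 0) x = code_state 1 0 x"
  shows "\<forall>i<M + 3. p i \<noteq> 1 \<and> p i \<noteq> 2"
proof -
  define F where "F = {i. i < M + 3 \<and> (p i = 1 \<or> p i = 2)}"
  have F: "F \<subseteq> {..<M + 3}" "finite F"
    by (auto simp: F_def)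
  have "F = {}"
  proof (rule ccontr)
    assume "F \<noteq> {}"
    have "{i. i < M + 3 \<and> (i \<in> {}) \<noteq> (p i = 1 \<or> p i = 2)} = F"
      by (auto simp: F_def)
    moreover have "profile0 a b M 0 = a"
      using M_ge_8 by (simp add: profile0_def)
    ultimately have "of_real a = c * (\<Prod>i<M + 3. pauli1 (p i) False (p i = 1 \<or> p i = 2)) *
        of_real (profile0 a b M (card F))"
      using profile0_if_pauli_fixes_code_state_1_0[OF fixed, of "{}"] by simp
    then have "profile0 a b M (card F) \<noteq> 0"
      using a_nonzero by auto
    with \<open>F \<noteq> {}\<close> F have card_F: "card F = M"
      by (auto simp: profile0_def split: if_splits)
    obtain x where x: "x \<in> F"
      using \<open>F \<noteq> {}\<close> by blast
    have "card ({..<M + 3} - F) = 3"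
      using F card_F by (simp add: card_Diff_subset)
    then obtain y where y: "y < M + 3" "y \<notin> F"
      by (metis Diff_iff card.empty lessThan_iff ex_in_conv zero_neq_numeral)
    define X where "X = insert y (F - {x})"
    have X: "X \<subseteq> {..<M + 3}" "card X = M"
      using F x y card_F M_ge_8 by (auto simp: X_def card_insert_if)
    have "{i. i < M + 3 \<and> (i \<in> X) \<noteq> (p i = 1 \<or> p i = 2)} = {x, y}"
      using F x y by (auto simp: X_def F_def)
    moreover have "x \<noteq> y"
      using x y by blast
    ultimately show False
      using profile0_if_pauli_fixes_code_state_1_0[OF fixed X(1)] X(2) b_nonzero M_ge_8
      by (simp add: profile0_def)
  qed
  then show ?thesis
    by (auto simp: F_def)
qed

text \<open>On the weight-\<open>3\<close> part of \<open>|1>\<close> a diagonal Pauli operator acts by the sign \<open>\<Prod>i\<in>X. d i\<close>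
  for every \<open>3\<close>-set \<open>X\<close>. Exchanging one element of \<open>X\<close> shows that all \<open>d i\<close> are equal, and then
  \<open>d 0 ^ 3 = 1\<close> forces \<open>d 0 = 1\<close>.\<close>
lemma no_Z_on_qubit_0_if_fixes_code_state_0_1:
  assumes no_flip: "\<forall>i<M + 3. p i \<noteq> 1 \<and> p i \<noteq> 2"
    and fixed: "\<And>x. pauli_op (M + 3) p (code_state 0 1) x = code_state 0 1 x"
  shows "p 0 \<noteq> 3"
proof -
  define d where "d i = (if p i = 3 then -1 else 1 :: complex)" for i
  have sign: "(\<Prod>i\<in>X. d i) = 1" if X: "X \<subseteq> {..<M + 3}" "card X = 3" for X
  proof -
    have "code_state 0 1 (set_encode X) = of_real b"
      using X M_ge_8 by (simp add: code_state_set_encode code_profile_def profile1_def)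
    moreover have "pauli_op (M + 3) p (code_state 0 1) (set_encode X) = (\<Prod>i\<in>X. d i) * code_state 0 1 (set_encode X)"
      unfolding d_def by (rule pauli_op_diagonal_set_encode[OF no_flip X(1)])
    ultimately show ?thesis
      using fixed[of "set_encode X"] b_nonzero by simp
  qed
  have equal: "d i = d j" if "i < M + 3" "j < M + 3" for i j
  proof -
    have "card {i, j} \<le> 2"
      by (cases "i = j") auto
    then have "2 \<le> card ({..<M + 3} - {i, j})"
      using M_ge_8 that by (subst card_Diff_subset) auto
    then obtain A where A: "A \<subseteq> {..<M + 3} - {i, j}" "card A = 2" "finite A"
      by (rule obtain_subset_with_card_n)
    have "insert i A \<subseteq> {..<M + 3}" "insert j A \<subseteq> {..<M + 3}" "i \<notin> A" "j \<notin> A"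
      using A that by auto
    then have "d i * (\<Prod>k\<in>A. d k) = 1" "d j * (\<Prod>k\<in>A. d k) = 1"
      using sign[of "insert i A"] sign[of "insert j A"] A by simp_all
    then show ?thesis
      by (metis mult_cancel_right mult_zero_left zero_neq_one)
  qed
  have "(\<Prod>i\<in>{0, 1, 2}. d i) = 1"
    using M_ge_8 by (intro sign) auto
  then have "d 0 ^ 3 = 1"
    using equal[of 0 1] equal[of 0 2] M_ge_8 by (simp add: power3_eq_cube mult.assoc)
  then show ?thesis
    by (auto simp: d_def)
qed

lemma pauli_group_fixing_code_fixes_basis_state_1:
  assumes "g \<in> pauli_group (M + 3)" "g (code_state 1 0) = code_state 1 0" "g (code_state 0 1) = code_state 0 1"
  shows "g (basis_state 1) = basis_state 1"
proof -
  obtain k p where g: "g = (\<lambda>\<psi> x. \<i> ^ k * pauli_op (M + 3) p \<psi> x)"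
    using assms(1) by (auto simp: pauli_group_def)
  have fixed0: "\<And>x. \<i> ^ k * pauli_op (M + 3) p (code_state 1 0) x = code_state 1 0 x"
    using assms(2) unfolding g by (simp add: fun_eq_iff)
  then have no_flip: "\<forall>i<M + 3. p i \<noteq> 1 \<and> p i \<noteq> 2"
    by (rule no_flip_if_fixes_code_state_1_0)
  have "\<i> ^ k * code_state 1 0 (set_encode {}) = code_state 1 0 (set_encode {})"
    using fixed0[of "set_encode {}"] pauli_op_diagonal_set_encode[OF no_flip, of "{}"] by simp
  moreover have "code_state 1 0 (set_encode {}) = of_real a"
    using code_state_set_encode[of "{}" 1 0] M_ge_8 by (simp add: code_profile_def profile0_def profile1_def)
  ultimately have phase: "\<i> ^ k = 1"
    using a_nonzero by simp
  have "p 0 \<noteq> 3"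
    using no_flip by (rule no_Z_on_qubit_0_if_fixes_code_state_0_1) (use assms(3) phase in \<open>simp add: g\<close>)
  show ?thesis
  proof (rule supported_eqI)
    show "supported (M + 3) (g (basis_state 1))"
      using supported_tensor_apply by (simp add: g pauli_op_def supported_def)
    show "supported (M + 3) (basis_state 1)"
      by (rule supported_basis_state) (use one_less_power[of "2::nat" "M + 3"] in simp)
  next
    fix X assume X: "X \<subseteq> {..<M + 3}"
    have "set_encode X = set_encode {0} \<longleftrightarrow> X = {0}"
      using X by (intro set_encode_eq) (auto intro: finite_subset)
    then have "set_encode X = 1 \<longleftrightarrow> X = {0}"
      by simp
    then show "g (basis_state 1) (set_encode X) = basis_state 1 (set_encode X)"
      using \<open>p 0 \<noteq> 3\<close> phase by (auto simp: g pauli_op_diagonal_set_encode[OF no_flip X] basis_state_def)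
  qed
qed

theorem not_stabilizer_code_space: "\<not> stabilizer_code (M + 3) (cspan_list [code_state 1 0, code_state 0 1])"
proof
  assume "stabilizer_code (M + 3) (cspan_list [code_state 1 0, code_state 0 1])"
  then obtain S where S: "stabilizer_group (M + 3) S"
    and C: "cspan_list [code_state 1 0, code_state 0 1] = {\<psi>. supported (M + 3) \<psi> \<and> (\<forall>g\<in>S. g \<psi> = \<psi>)}"
    by (auto simp: stabilizer_code_def)
  have "code_state 1 0 \<in> cspan_list [code_state 1 0, code_state 0 1]"
    "code_state 0 1 \<in> cspan_list [code_state 1 0, code_state 0 1]"
    unfolding cspan_list_code_basis by blast+
  then have "g (basis_state 1) = basis_state 1" if "g \<in> S" for g
    using that S C by (intro pauli_group_fixing_code_fixes_basis_state_1) (auto simp: stabilizer_group_def)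
  moreover have "supported (M + 3) (basis_state 1)"
    by (rule supported_basis_state) (use one_less_power[of "2::nat" "M + 3"] in simp)
  ultimately have "basis_state 1 \<in> cspan_list [code_state 1 0, code_state 0 1]"
    using C by blast
  then obtain c0 c1 where "basis_state 1 = code_state c0 c1"
    unfolding cspan_list_code_basis by blast
  then have "basis_state 1 (set_encode {0}) = code_profile c0 c1 1"
    using code_state_set_encode[of "{0}" c0 c1] by simp
  then show False
    using M_ge_8 by (simp add: basis_state_def code_profile_def profile0_def profile1_def)
qed

end

definition amp_a :: "nat \<Rightarrow> real" where
  "amp_a r = sqrt (2 ^ r - 3) / sqrt (2 ^ (r + 1))"

text \<open>The amplitude of each weight-\<open>2 ^ r\<close> basis state in \<open>|0>\<close>; the Dicke state of weight \<open>2 ^ r\<close>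
  is normalised by \<open>(2 ^ r + 3) choose 2 ^ r = (2 ^ r + 3) choose 3\<close>.\<close>
definition amp_b :: "nat \<Rightarrow> real" where
  "amp_b r = sqrt (2 ^ r + 3) / sqrt (2 ^ (r + 1)) / sqrt (real ((2 ^ r + 3) choose 3))"

lemma dicke_code_amp:
  assumes "3 \<le> r"
  shows "dicke_code (amp_a r) (amp_b r) (2 ^ r)"
proof
  show "8 \<le> (2::nat) ^ r"
    using power_increasing[of 3 r "2::nat"] assms by simp
  then have x: "(8::real) \<le> 2 ^ r"
    by (metis of_nat_le_iff of_nat_numeral of_nat_power)
  have "amp_a r ^ 2 = (2 ^ r - 3) / 2 ^ (r + 1)"
    using x by (simp add: amp_a_def power_divide)
  then show "amp_a r * amp_a r = (real (2 ^ r) - 3) / (2 * real (2 ^ r))"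
    by (simp add: power2_eq_square)
  have "amp_b r ^ 2 = (2 ^ r + 3) / 2 ^ (r + 1) / real ((2 ^ r + 3) choose 3)"
    using x by (simp add: amp_b_def power_divide power_mult_distrib)
  also have "real ((2 ^ r + 3) choose 3) = (2 ^ r + 3) * (2 ^ r + 2) * (2 ^ r + 1) / 6"
    by (simp add: real_choose_three algebra_simps)
  also have "(2 ^ r + 3) / 2 ^ (r + 1) / ((2 ^ r + 3) * (2 ^ r + 2) * (2 ^ r + 1) / 6) =
      3 / ((2::real) ^ r * (2 ^ r + 1) * (2 ^ r + 2))"
  proof -
    have "(2::real) ^ r + 1 \<noteq> 0" "(2::real) ^ r + 2 \<noteq> 0" "(2::real) ^ r + 3 \<noteq> 0"
      using x by linarith+
    then show ?thesis
      by (simp add: divide_simps)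
  qed
  finally show "amp_b r * amp_b r = 3 / (real (2 ^ r) * (real (2 ^ r) + 1) * (real (2 ^ r) + 2))"
    by (simp add: power2_eq_square)
qed

lemma cw0_eq_code_state:
  assumes "3 \<le> r"
  shows "cw0 r = dicke_code.code_state (amp_a r) (amp_b r) (2 ^ r) 1 0"
proof -
  have "2 ^ r + 3 choose 2 ^ r = 2 ^ r + 3 choose 3"
    using binomial_symmetric[of "2 ^ r" "2 ^ r + 3"] by simp
  then show ?thesis
    unfolding cw0_def Let_def dicke_eq_sym_state sym_state_lincomb
      dicke_code.code_state_def[OF dicke_code_amp[OF assms]] dicke_code.code_profile_def[OF dicke_code_amp[OF assms]]
    by (intro sym_state_cong) (auto simp: profile0_def profile1_def amp_a_def amp_b_def)
qed

lemma cw1_eq_code_state: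
  assumes "3 \<le> r"
  shows "cw1 r = dicke_code.code_state (amp_a r) (amp_b r) (2 ^ r) 0 1"
  unfolding cw1_def Let_def dicke_eq_sym_state sym_state_lincomb
    dicke_code.code_state_def[OF dicke_code_amp[OF assms]] dicke_code.code_profile_def[OF dicke_code_amp[OF assms]]
  by (intro sym_state_cong) (auto simp: profile0_def profile1_def amp_a_def amp_b_def)

theorem mainTheorem7:
  fixes r :: nat
  assumes "r \<ge> 3"
  shows "qcode (2^r + 3) 2 3 (cspan_list [cw0 r, cw1 r]) \<and>
         \<not> stabilizer_code (2^r + 3) (cspan_list [cw0 r, cw1 r]) \<and>
         perm_invariant (2^r + 3) (cspan_list [cw0 r, cw1 r]) \<and>
         transversal (2^r + 3) (\<lambda>j. if j then cw1 r else cw0 r) (quatgroup r)"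
proof -
  interpret dicke_code "amp_a r" "amp_b r" "2 ^ r"
    using assms by (rule dicke_code_amp)
  have "coprime (2 ^ r + 3) (2 * 2 ^ r :: nat)"
    using assms by (simp flip: power_Suc)
  moreover have "quatgroup r \<subseteq> root_monomials (2 ^ r)"
    using assms by (intro quatgroup_subset_root_monomials) simp
  moreover have "sfX \<in> quatgroup r" "sfZ \<in> quatgroup r"
    by (auto simp: quatgroup_def intro: mgen.base)
  ultimately show ?thesis
    unfolding cw0_eq_code_state[OF assms] cw1_eq_code_state[OF assms]
    using qcode_code_space not_stabilizer_code_space perm_invariant_code_space transversal_code_space
    by simp
qed

end
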